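(* Let $\mathcal{M}_1$ be the set of real symmetric $2\times2$ matrices $\mathbf{V}$ with $\mathbf{V}+\tfrac{i}{2}\mathbf{\Omega}>0$, where $\mathbf{\Omega}=\begin{pmatrix}0&1\\-1&0\end{pmatrix}$, equipped with the Riemannian metric $$G_{\mathbf{V}}(\mathbf{A},\mathbf{B})=\int_{-1}^{1}d\lambda\;\mathrm{Tr}\Big[\mathbf{B}\,(2\mathbf{V}+i\lambda\mathbf{\Omega})^{-1}\mathbf{A}\,(2\mathbf{V}+i\lambda\mathbf{\Omega})^{-1}\Big],$$ and let $\mathrm{Scal}(\mathbf{V})$ denote the scalar curvature of $(\mathcal{M}_1,G)$ at $\mathbf{V}$. For $\mathbf{V}\in\mathcal{M}_1$ with symplectic eigenvalue $\nu=\sqrt{\det\mathbf{V}}>1/2$, let $$S_{vN}(\mathbf{V})=\Big(\nu+\tfrac12\Big)\log_2\Big(\nu+\tfrac12\Big)-\Big(\nu-\tfrac12\Big)\log_2\Big(\nu-\tfrac12\Big)$$ be the von Neumann entropy of the corresponding single-mode Gaussian state. Then for all $\mathbf{V},\mathbf{V}'\in\mathcal{M}_1$, $$\mathrm{Scal}(\mathbf{V}')>\mathrm{Scal}(\mathbf{V})\iff S_{vN}(\mathbf{V}')>S_{vN}(\mathbf{V}).$$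
   Context: $\mathcal{M}_1$ parametrizes (via covariance matrices) the faithful zero-displacement single-mode bosonic Gaussian states; it is an open subset of the 3-dimensional space of real symmetric $2\times2$ matrices, with tangent spaces identified with that space, and $G$ is the Kubo-Mori-Bogoliubov metric. The scalar curvature is the usual Riemannian scalar curvature of $G$. For a single mode the symplectic eigenvalue $\nu$ of $\mathbf{V}$ (defined by $\mathbf{V}=\mathbf{S}\,\mathrm{diag}(\nu,\nu)\mathbf{S}^T$ with $\mathbf{S}\mathbf{\Omega}\mathbf{S}^T=\mathbf{\Omega}$) equals $\sqrt{\det\mathbf{V}}$. *)

theory Defs
  imports "HOL-Analysis.Analysis"
begin

definition Omega :: "real^2^2" where
  "Omega = vector [vector [0, 1], vector [-1, 0]]"

definition cmat :: "real^2^2 \<Rightarrow> complex^2^2" where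
  "cmat M = (\<chi> i j. complex_of_real (M$i$j))"

definition pos_def_herm :: "complex^2^2 \<Rightarrow> bool" where
  "pos_def_herm M \<longleftrightarrow> (\<forall>z::complex^2. z \<noteq> 0 \<longrightarrow>
      (let q = (\<Sum>i\<in>UNIV. \<Sum>j\<in>UNIV. cnj (z$i) * M$i$j * z$j) in Im q = 0 \<and> Re q > 0))"

definition M1 :: "(real^2^2) set" where
  "M1 = {V. transpose V = V \<and>
           pos_def_herm (\<chi> i j. complex_of_real (V$i$j) + (\<i>/2) * complex_of_real (Omega$i$j))}"

definition KMB_mat :: "real^2^2 \<Rightarrow> real \<Rightarrow> complex^2^2" where
  "KMB_mat V l = (\<chi> i j. 2 * complex_of_real (V$i$j) + \<i> * complex_of_real l * complex_of_real (Omega$i$j))"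

text \<open>Kubo-Mori-Bogoliubov metric G_V(A,B) (the integral is real; we take its real part).\<close>
definition KMB :: "real^2^2 \<Rightarrow> real^2^2 \<Rightarrow> real^2^2 \<Rightarrow> real" where
  "KMB V A B = Re (integral {-1..1::real}
      (\<lambda>l. trace (cmat B ** matrix_inv (KMB_mat V l) ** cmat A ** matrix_inv (KMB_mat V l))))"

definition sym_of_coords :: "real^3 \<Rightarrow> real^2^2" where
  "sym_of_coords x = vector [vector [x$1, x$2], vector [x$2, x$3]]"

definition coords_of_sym :: "real^2^2 \<Rightarrow> real^3" where
  "coords_of_sym V = vector [V$1$1, V$1$2, V$2$2]"

definition gco :: "real^3 \<Rightarrow> 3 \<Rightarrow> 3 \<Rightarrow> real" where
  "gco x i j = KMB (sym_of_coords x) (sym_of_coords (axis i 1)) (sym_of_coords (axis j 1))"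

definition ginv :: "real^3 \<Rightarrow> real^3^3" where
  "ginv x = matrix_inv (\<chi> i j. gco x i j)"

definition pd :: "(real^3 \<Rightarrow> real) \<Rightarrow> 3 \<Rightarrow> real^3 \<Rightarrow> real" where
  "pd f i x = deriv (\<lambda>t. f (x + t *\<^sub>R axis i 1)) 0"

definition Chr :: "real^3 \<Rightarrow> 3 \<Rightarrow> 3 \<Rightarrow> 3 \<Rightarrow> real" where
  "Chr x k i j = (1/2) * (\<Sum>l\<in>UNIV. ginv x $k$l *
      (pd (\<lambda>y. gco y j l) i x + pd (\<lambda>y. gco y i l) j x - pd (\<lambda>y. gco y i j) l x))"

definition Riem :: "real^3 \<Rightarrow> 3 \<Rightarrow> 3 \<Rightarrow> 3 \<Rightarrow> 3 \<Rightarrow> real" where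
  "Riem x r s m n = pd (\<lambda>y. Chr y r n s) m x - pd (\<lambda>y. Chr y r m s) n x
      + (\<Sum>l\<in>UNIV. Chr x r m l * Chr x l n s - Chr x r n l * Chr x l m s)"

definition Ric :: "real^3 \<Rightarrow> 3 \<Rightarrow> 3 \<Rightarrow> real" where
  "Ric x s n = (\<Sum>r\<in>UNIV. Riem x r s r n)"

definition scal_coords :: "real^3 \<Rightarrow> real" where
  "scal_coords x = (\<Sum>s\<in>UNIV. \<Sum>n\<in>UNIV. ginv x $s$n * Ric x s n)"

definition Scal :: "real^2^2 \<Rightarrow> real" where
  "Scal V = scal_coords (coords_of_sym V)"

definition S_vN :: "real^2^2 \<Rightarrow> real" where
  "S_vN V = (let \<nu> = sqrt (det V) in
     (\<nu> + 1/2) * log 2 (\<nu> + 1/2) - (\<nu> - 1/2) * log 2 (\<nu> - 1/2))"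

end

theory Submission
  imports Defs
begin

text \<open>In the coordinates \<open>V = ((a, b), (b, c))\<close> let \<open>D = a c - b\<^sup>2 = \<nu>\<^sup>2\<close>. The matrix
  \<open>2 V + i \<lambda> \<Omega>\<close> has determinant \<open>4 D - \<lambda>\<^sup>2\<close>, so its inverse is explicit, and integrating over
  \<open>\<lambda>\<close> shows that the KMB metric is \<open>G = P(\<nu>) \<eta> + Q(\<nu>) \<nabla>D \<nabla>D\<^sup>T\<close>, where \<open>\<eta>\<close> is the
  constant Hessian of \<open>D\<close>, \<open>P = - L / (2 \<nu>)\<close>, \<open>Q = dP/dD\<close> and
  \<open>L = ln ((2 \<nu> + 1) / (2 \<nu> - 1))\<close>. Since \<open>\<nabla>D = \<eta> x\<close>, the inverse metric has the same shape, and the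
  Christoffel symbols, the Ricci tensor and the scalar curvature all collapse to explicit functions of
  \<open>\<nu>\<close> alone. The resulting function of \<open>\<nu>\<close> has positive derivative on \<open>\<nu> > 1/2\<close>, and so has
  the entropy, whose derivative is \<open>log\<^sub>2 ((\<nu> + 1/2) / (\<nu> - 1/2))\<close>; two strictly increasing
  functions of the same variable order the states in the same way.\<close>

section \<open>Coefficient functions of \<open>\<nu>\<close>\<close>

definition log_ratio :: "real \<Rightarrow> real" where
  "log_ratio v = ln (2 * v + 1) - ln (2 * v - 1)"

text \<open>Kept opaque in the \<open>field_simps\<close> steps below and unfolded only for the final \<open>algebra\<close>.\<close>

definition kappa :: "real \<Rightarrow> real" where
  "kappa v = 4 * v^2 - 1"

text \<open>Derivatives are taken with respect to \<open>D = v\<^sup>2\<close>, hence the factor \<open>2 * v\<close> in the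
  derivative lemmas.\<close>

definition metric_P :: "real \<Rightarrow> real" where
  "metric_P v = - log_ratio v / (2 * v)"

definition metric_Q :: "real \<Rightarrow> real" where
  "metric_Q v = 1 / (v^2 * kappa v) + log_ratio v / (4 * v^3)"

definition metric_Q1 :: "real \<Rightarrow> real" where
  "metric_Q1 v = - (20 * v^2 - 3) / (2 * v^4 * (kappa v)^2) - 3 * log_ratio v / (8 * v^5)"

lemma kappa_pos: "1/2 < v \<Longrightarrow> 0 < kappa v"
proof -
  assume "1/2 < v"
  then have "1/2 * (1/2) < v * v" by (intro mult_strict_mono) auto
  then show ?thesis unfolding kappa_def by (simp add: power2_eq_square)
qed

lemma log_ratio_pos: "1/2 < v \<Longrightarrow> 0 < log_ratio v"
  unfolding log_ratio_def by simp

lemma metric_P_neg: "1/2 < v \<Longrightarrow> metric_P v < 0"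
  unfolding metric_P_def using log_ratio_pos[of v] by (simp add: field_simps)

lemma nonzero_if_gt_half:
  assumes "1/2 < v" shows "v \<noteq> 0" "kappa v \<noteq> 0" "log_ratio v \<noteq> 0"
  using assms kappa_pos[OF assms] log_ratio_pos[OF assms] by auto

lemma kappa_has_derivative: "D = 8 * v \<Longrightarrow> (kappa has_real_derivative D) (at v within S)"
  unfolding kappa_def[abs_def] by (auto intro!: derivative_eq_intros)

lemma log_ratio_has_derivative:
  assumes "1/2 < v" "D = -4 / kappa v"
  shows "(log_ratio has_real_derivative D) (at v within S)"
proof -
  have "(log_ratio has_real_derivative 2 / (2 * v + 1) - 2 / (2 * v - 1)) (at v within S)"
    unfolding log_ratio_def[abs_def] using assms(1) by (auto intro!: derivative_eq_intros)
  moreover have "2 / (2 * v + 1) - 2 / (2 * v - 1) = -4 / kappa v"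
    using assms(1) nonzero_if_gt_half[OF assms(1)]
    by (simp add: kappa_def field_simps power2_eq_square)
  ultimately show ?thesis using assms(2) by simp
qed

lemma metric_P_has_derivative:
  assumes "1/2 < v" "D = 2 * v * metric_Q v"
  shows "(metric_P has_real_derivative D) (at v within S)"
  unfolding metric_P_def[abs_def]
  using nonzero_if_gt_half[OF assms(1)]
  apply (auto intro!: derivative_eq_intros log_ratio_has_derivative assms(1))
  unfolding assms(2) metric_Q_def
  by (simp add: field_simps power2_eq_square power3_eq_cube)

lemma metric_Q_has_derivative:
  assumes "1/2 < v" "D = 2 * v * metric_Q1 v"
  shows "(metric_Q has_real_derivative D) (at v within S)"
  unfolding metric_Q_def[abs_def] using nonzero_if_gt_half[OF assms(1)]
  apply (auto intro!: derivative_eq_intros kappa_has_derivative log_ratio_has_derivative assms(1))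
  unfolding assms(2) metric_Q1_def
  apply (simp add: field_simps)
  unfolding kappa_def by algebra

section \<open>Coordinates on symmetric matrices\<close>

definition cdet :: "real^3 \<Rightarrow> real" where
  "cdet x = x$1 * x$3 - (x$2)^2"

text \<open>Twice the polar form of \<open>cdet\<close>: \<open>cdet_form x\<close> is the gradient \<open>cdet_grad x\<close> and
  \<open>cdet_form\<close> itself the constant Hessian \<open>cdet_hess\<close>.\<close>

definition cdet_form :: "real^3 \<Rightarrow> real^3 \<Rightarrow> real" where
  "cdet_form y z = y$1 * z$3 + y$3 * z$1 - 2 * y$2 * z$2"

definition cdet_grad :: "real^3 \<Rightarrow> 3 \<Rightarrow> real" where
  "cdet_grad x i = (if i = 1 then x$3 else if i = 2 then -2 * x$2 else x$1)"

definition cdet_hess :: "3 \<Rightarrow> 3 \<Rightarrow> real" where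
  "cdet_hess i j = (if (i = 1 \<and> j = 3) \<or> (i = 3 \<and> j = 1) then 1 else if i = 2 \<and> j = 2 then -2 else 0)"

definition cdet_hess_inv :: "3 \<Rightarrow> 3 \<Rightarrow> real" where
  "cdet_hess_inv i j = (if (i = 1 \<and> j = 3) \<or> (i = 3 \<and> j = 1) then 1 else if i = 2 \<and> j = 2 then -1/2 else 0)"

definition nu :: "real^3 \<Rightarrow> real" where
  "nu x = sqrt (cdet x)"

lemma cdet_form_axis_right: "cdet_form x (axis i 1) = cdet_grad x i"
  using exhaust_3[of i] by (auto simp: cdet_form_def cdet_grad_def axis_def)

lemma cdet_grad_axis: "cdet_grad (axis i 1) j = cdet_hess i j"
  using exhaust_3[of i] exhaust_3[of j] by (auto simp: cdet_grad_def cdet_hess_def axis_def)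

lemma component_along_axis: "(x + t *\<^sub>R axis m 1)$k = x$k + t * of_bool (m = k)"
  by (simp add: axis_def)

lemma cdet_along_axis: "cdet (x + t *\<^sub>R axis m 1) = cdet x + t * cdet_grad x m + t^2 * (cdet_hess m m / 2)"
  using exhaust_3[of m]
  by (auto simp: cdet_def cdet_grad_def cdet_hess_def axis_def algebra_simps power2_eq_square)

lemma cdet_grad_along_axis: "cdet_grad (x + t *\<^sub>R axis m 1) i = cdet_grad x i + t * cdet_hess m i"
  using exhaust_3[of m] exhaust_3[of i] by (auto simp: cdet_grad_def cdet_hess_def axis_def)

lemma open_cdet_gt: "open {x. c < cdet x}"
  by (rule open_Collect_less) (auto simp: cdet_def intro!: continuous_intros)

lemma nu_gt_half: "1/4 < cdet x \<Longrightarrow> 1/2 < nu x"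
  unfolding nu_def by (intro real_less_rsqrt) (simp add: power2_eq_square)

lemma nu_squared: "0 \<le> cdet x \<Longrightarrow> (nu x)^2 = cdet x"
  unfolding nu_def by simp

lemma det_eq_cdet: "transpose V = V \<Longrightarrow> det V = cdet (coords_of_sym V)"
  unfolding det_2 cdet_def coords_of_sym_def
  by (metis (no_types, lifting) power2_eq_square transpose_def vec_lambda_beta vector_3)

lemma M1_cdet_gt:
  assumes "V \<in> M1"
  shows "1/4 < cdet (coords_of_sym V)"
proof -
  define a b c where "a = V$1$1" and "b = V$1$2" and "c = V$2$2"
  have sym: "V$2$1 = b"
    using assms unfolding M1_def b_def by (metis (mono_tags, lifting) mem_Collect_eq transpose_def vec_lambda_beta)
  have pos: "0 < Re (\<Sum>i\<in>UNIV. \<Sum>j\<in>UNIV. cnj (z$i) * (of_real (V$i$j) + (\<i>/2) * of_real (Omega$i$j)) * z$j)"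
    if "z \<noteq> 0" for z :: "complex^2"
    using assms that unfolding M1_def pos_def_herm_def Let_def by simp
  \<comment> \<open>\<open>z2\<close> is orthogonal to the first row of \<open>V + (\<i>/2) \<Omega>\<close>, so the form at \<open>z2\<close> is \<open>a\<close> times the determinant.\<close>
  define z1 :: "complex^2" where "z1 = vector [1, 0]"
  define z2 :: "complex^2" where "z2 = vector [- (of_real b + \<i>/2), of_real a]"
  have "z1 \<noteq> 0" unfolding z1_def by (metis vector_2(1) zero_index zero_neq_one)
  from pos[OF this] have a: "0 < a"
    unfolding z1_def a_def by (simp add: sum_2 Omega_def)
  have "z2 \<noteq> 0" unfolding z2_def using a by (metis vector_2(2) zero_index of_real_eq_0_iff less_irrefl)
  from pos[OF this] have "0 < a * (a * c - b^2 - 1/4)"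
    unfolding z2_def by (simp add: sum_2 Omega_def sym a_def[symmetric] b_def[symmetric] c_def[symmetric]
        algebra_simps power2_eq_square)
  then show ?thesis
    using a unfolding cdet_def coords_of_sym_def a_def b_def c_def by (simp add: zero_less_mult_iff)
qed

section \<open>The KMB metric in coordinates\<close>

lemma matrix_inv_unique:
  fixes A B :: "'a::semiring_1^'n^'n"
  assumes "A ** B = mat 1" "B ** A = mat 1"
  shows "matrix_inv A = B"
proof -
  have "\<exists>A'. A ** A' = mat 1 \<and> A' ** A = mat 1" using assms by blast
  then have inv: "A ** matrix_inv A = mat 1 \<and> matrix_inv A ** A = mat 1"
    unfolding matrix_inv_def by (rule someI_ex)
  have "matrix_inv A = matrix_inv A ** (A ** B)" using assms by (simp add: matrix_mul_rid)
  also have "\<dots> = B" using inv by (simp add: matrix_mul_assoc matrix_mul_lid)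
  finally show ?thesis .
qed

definition scaled_KMB_adjugate :: "real \<Rightarrow> real^3 \<Rightarrow> real \<Rightarrow> complex^2^2" where
  "scaled_KMB_adjugate s x l =
    vector [vector [of_real s * (2 * of_real (x$3)), of_real s * (- (2 * of_real (x$2)) - \<i> * of_real l)],
            vector [of_real s * (- (2 * of_real (x$2)) + \<i> * of_real l), of_real s * (2 * of_real (x$1))]]"

lemma KMB_mat_sym_of_coords:
  "KMB_mat (sym_of_coords x) l =
    vector [vector [2 * of_real (x$1), 2 * of_real (x$2) + \<i> * of_real l],
            vector [2 * of_real (x$2) - \<i> * of_real l, 2 * of_real (x$3)]]"
  unfolding KMB_mat_def sym_of_coords_def Omega_def by (simp add: vec_eq_iff forall_2 vector_def)

lemma matrix_inv_KMB_mat: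
  assumes "4 * cdet x - l^2 \<noteq> 0"
  shows "matrix_inv (KMB_mat (sym_of_coords x) l) = scaled_KMB_adjugate (1 / (4 * cdet x - l^2)) x l"
proof (rule matrix_inv_unique)
  define d where "d = 4 * cdet x - l^2"
  have "d \<noteq> 0" using assms unfolding d_def .
  then show "KMB_mat (sym_of_coords x) l ** scaled_KMB_adjugate (1 / (4 * cdet x - l^2)) x l = mat 1"
    and "scaled_KMB_adjugate (1 / (4 * cdet x - l^2)) x l ** KMB_mat (sym_of_coords x) l = mat 1"
    unfolding KMB_mat_sym_of_coords scaled_KMB_adjugate_def d_def[symmetric]
    by (simp_all add: vec_eq_iff forall_2 matrix_matrix_mult_def sum_2 mat_def complex_eq_iff field_simps)
      (simp_all add: d_def cdet_def algebra_simps power2_eq_square)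
qed

lemma Re_trace_scaled_KMB_adjugate:
  "Re (trace (cmat (sym_of_coords z) ** scaled_KMB_adjugate s x l ** cmat (sym_of_coords y) ** scaled_KMB_adjugate s x l))
     = s^2 * (4 * (cdet_form x y * cdet_form x z - cdet x * cdet_form y z) + cdet_form y z * l^2)"
  unfolding scaled_KMB_adjugate_def cmat_def sym_of_coords_def trace_def
  by (simp add: sum_2 matrix_matrix_mult_def vector_def)
    (simp add: cdet_form_def cdet_def algebra_simps power2_eq_square)

lemma continuous_on_trace_scaled_KMB_adjugate:
  assumes "continuous_on S s"
  shows "continuous_on S (\<lambda>l. trace (cmat (sym_of_coords z) ** scaled_KMB_adjugate (s l) x l
     ** cmat (sym_of_coords y) ** scaled_KMB_adjugate (s l) x l))"
  unfolding scaled_KMB_adjugate_def trace_def matrix_matrix_mult_def cmat_def sym_of_coords_def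
  by (simp add: sum_2 vector_def) (intro continuous_intros assms)

lemma has_integral_div_square_diff_squares:
  fixes c T E :: real
  assumes "1 < c"
  shows "((\<lambda>l. (T + E * l^2) / (c^2 - l^2)^2) has_integral
     (T + E * c^2) * (1 / (c^2 * (c^2 - 1)) + (ln (c + 1) - ln (c - 1)) / (2 * c^3))
     - E * (ln (c + 1) - ln (c - 1)) / c) {-1..1}"
proof -
  define F where "F l = (T + E * c^2) * (l / (2 * c^2 * (c^2 - l^2)) + (ln (c + l) - ln (c - l)) / (4 * c^3))
    - E * (ln (c + l) - ln (c - l)) / (2 * c)" for l
  have "(F has_real_derivative (T + E * l^2) / (c^2 - l^2)^2) (at l within {-1..1})"
    if "l \<in> {-1..1}" for l
  proof -
    have pos: "0 < c + l" "0 < c - l" using assms that by auto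
    define w where "w = c^2 - l^2"
    have "w = (c + l) * (c - l)" unfolding w_def by (simp add: power2_eq_square algebra_simps)
    with pos have nz: "w \<noteq> 0" "c \<noteq> 0" by auto
    have l2: "l^2 = c^2 - w" unfolding w_def by simp
    have log: "((\<lambda>l. ln (c + l) - ln (c - l)) has_real_derivative 2 * c / w) (at l within {-1..1})"
      using pos nz by (auto intro!: derivative_eq_intros simp: w_def field_simps power2_eq_square)
    have rat: "((\<lambda>l. l / (2 * c^2 * (c^2 - l^2))) has_real_derivative
        (2 * c^2 * w + l * (2 * c^2 * (2 * l))) / (2 * c^2 * w)^2) (at l within {-1..1})"
      using nz unfolding w_def by (auto intro!: derivative_eq_intros simp: power2_eq_square)
    have "(F has_real_derivative (T + E * c^2) * ((2 * c^2 * w + l * (2 * c^2 * (2 * l))) / (2 * c^2 * w)^2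
        + 2 * c / w / (4 * c^3)) - E * (2 * c / w) / (2 * c)) (at l within {-1..1})"
      unfolding F_def[abs_def]
      by (rule DERIV_diff[OF DERIV_cmult[OF DERIV_add[OF rat DERIV_cdivide[OF log]]]
            DERIV_cdivide[OF DERIV_cmult[OF log]]])
    moreover have "l * (2 * c^2 * (2 * l)) = 4 * c^2 * (c^2 - w)"
      unfolding l2[symmetric] by (simp add: power2_eq_square)
    then have "(T + E * c^2) * ((2 * c^2 * w + l * (2 * c^2 * (2 * l))) / (2 * c^2 * w)^2
        + 2 * c / w / (4 * c^3)) - E * (2 * c / w) / (2 * c) = (T + E * l^2) / (c^2 - l^2)^2"
      unfolding w_def[symmetric] l2 using nz by (simp add: field_simps power2_eq_square power3_eq_cube)
    ultimately show ?thesis by simp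
  qed
  then have "((\<lambda>l. (T + E * l^2) / (c^2 - l^2)^2) has_integral F 1 - F (-1)) {-1..1}"
    by (intro fundamental_theorem_of_calculus) (auto simp: has_real_derivative_iff_has_vector_derivative[symmetric])
  moreover have "F 1 - F (-1) = (T + E * c^2) * (1 / (c^2 * (c^2 - 1)) + (ln (c + 1) - ln (c - 1)) / (2 * c^3))
     - E * (ln (c + 1) - ln (c - 1)) / c"
  proof -
    define m L where "m = c^2 - 1" and "L = ln (c + 1) - ln (c - 1)"
    have "1 < c^2" using assms by (simp add: one_less_power)
    then have nz: "m \<noteq> 0" "c \<noteq> 0" unfolding m_def by auto
    have "F 1 = (T + E * c^2) * (1 / (2 * c^2 * m) + L / (4 * c^3)) - E * L / (2 * c)"
      and "F (-1) = (T + E * c^2) * (-1 / (2 * c^2 * m) - L / (4 * c^3)) + E * L / (2 * c)"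
      unfolding F_def m_def L_def using nz by (simp_all add: field_simps)
    then show ?thesis
      unfolding m_def[symmetric] L_def[symmetric] using nz by (simp add: field_simps)
  qed
  ultimately show ?thesis by simp
qed

lemma KMB_sym_of_coords_has_integral:
  assumes "1/4 < cdet x"
  shows "((\<lambda>l. (4 * (cdet_form x y * cdet_form x z - cdet x * cdet_form y z) + cdet_form y z * l^2)
    / (4 * cdet x - l^2)^2) has_integral KMB (sym_of_coords x) (sym_of_coords y) (sym_of_coords z)) {-1..1}"
proof -
  define f where "f l = trace (cmat (sym_of_coords z) ** scaled_KMB_adjugate (1 / (4 * cdet x - l^2)) x l
    ** cmat (sym_of_coords y) ** scaled_KMB_adjugate (1 / (4 * cdet x - l^2)) x l)" for l
  have nz: "4 * cdet x - l^2 \<noteq> 0" if "l \<in> {-1..1}" for l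
  proof -
    have "l^2 \<le> 1" using that by (auto simp: abs_square_le_1)
    then show ?thesis using assms by simp
  qed
  have "integral {-1..1} (\<lambda>l. trace (cmat (sym_of_coords z) ** matrix_inv (KMB_mat (sym_of_coords x) l)
      ** cmat (sym_of_coords y) ** matrix_inv (KMB_mat (sym_of_coords x) l))) = integral {-1..1} f"
    unfolding f_def by (rule integral_cong) (simp add: matrix_inv_KMB_mat[OF nz])
  then have "KMB (sym_of_coords x) (sym_of_coords y) (sym_of_coords z) = Re (integral {-1..1} f)"
    unfolding KMB_def by simp
  moreover have "continuous_on {-1..1} f"
    unfolding f_def using nz
    by (intro continuous_on_trace_scaled_KMB_adjugate continuous_intros) auto
  then have "((Re \<circ> f) has_integral Re (integral {-1..1} f)) {-1..1}"
    by (intro has_integral_linear[OF _ bounded_linear_Re] integrable_integral integrable_continuous_interval)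
  moreover have "Re \<circ> f = (\<lambda>l. (4 * (cdet_form x y * cdet_form x z - cdet x * cdet_form y z)
      + cdet_form y z * l^2) / (4 * cdet x - l^2)^2)"
    unfolding f_def o_def Re_trace_scaled_KMB_adjugate by (simp add: power_divide)
  ultimately show ?thesis by simp
qed

lemma KMB_sym_of_coords:
  assumes "1/4 < cdet x"
  shows "KMB (sym_of_coords x) (sym_of_coords y) (sym_of_coords z) =
    metric_P (nu x) * cdet_form y z + metric_Q (nu x) * cdet_form x y * cdet_form x z"
proof -
  define v where "v = nu x"
  have v: "1/2 < v" and v2: "cdet x = v^2"
    unfolding v_def using nu_gt_half[OF assms] nu_squared[of x] assms by simp_all
  define T E where "T = 4 * (cdet_form x y * cdet_form x z - cdet x * cdet_form y z)" and "E = cdet_form y z"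
  have "((\<lambda>l. (T + E * l^2) / ((2 * v)^2 - l^2)^2)
      has_integral KMB (sym_of_coords x) (sym_of_coords y) (sym_of_coords z)) {-1..1}"
    using KMB_sym_of_coords_has_integral[OF assms] unfolding T_def E_def v2 by (simp add: power_mult_distrib)
  moreover have "((\<lambda>l. (T + E * l^2) / ((2 * v)^2 - l^2)^2) has_integral (T + E * (2 * v)^2)
      * (1 / ((2 * v)^2 * ((2 * v)^2 - 1)) + log_ratio v / (2 * (2 * v)^3)) - E * log_ratio v / (2 * v)) {-1..1}"
    unfolding log_ratio_def by (rule has_integral_div_square_diff_squares) (use v in simp)
  ultimately have "KMB (sym_of_coords x) (sym_of_coords y) (sym_of_coords z) = (T + E * (2 * v)^2)
      * (1 / ((2 * v)^2 * ((2 * v)^2 - 1)) + log_ratio v / (2 * (2 * v)^3)) - E * log_ratio v / (2 * v)"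
    by (rule has_integral_unique)
  also have "T + E * (2 * v)^2 = 4 * (cdet_form x y * cdet_form x z)"
    unfolding T_def E_def v2 by (simp add: algebra_simps power_mult_distrib)
  also have "(2 * v)^2 * ((2 * v)^2 - 1) = 4 * v^2 * kappa v"
    unfolding kappa_def by (simp add: power_mult_distrib)
  also have "2 * (2 * v)^3 = 16 * v^3"
    by (simp add: power_mult_distrib)
  finally show ?thesis
    using nonzero_if_gt_half[OF v] unfolding E_def v_def[symmetric] metric_P_def metric_Q_def
    by (simp add: field_simps)
qed

lemma pd_eq_on_open:
  assumes "open U" "x \<in> U" "\<And>y. y \<in> U \<Longrightarrow> f y = g y"
    and "((\<lambda>t. g (x + t *\<^sub>R axis i 1)) has_real_derivative d) (at 0)"
  shows "pd f i x = d"
proof -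
  let ?S = "(\<lambda>t::real. x + t *\<^sub>R axis i 1) -` U"
  have "open ?S" by (rule continuous_open_vimage[OF assms(1)]) (intro continuous_intros)
  moreover have "0 \<in> ?S" using assms(2) by simp
  ultimately have "((\<lambda>t. f (x + t *\<^sub>R axis i 1)) has_real_derivative d) (at 0)"
    by (rule has_field_derivative_transform_within_open[OF assms(4)]) (simp add: assms(3))
  then show ?thesis unfolding pd_def by (rule DERIV_imp_deriv)
qed

lemma nu_along_axis_has_derivative:
  assumes "0 < cdet x" and "(\<phi> has_real_derivative 2 * nu x * \<phi>') (at (nu x))"
  shows "((\<lambda>t. \<phi> (nu (x + t *\<^sub>R axis m 1))) has_real_derivative \<phi>' * cdet_grad x m) (at 0)"
proof -
  have "((\<lambda>t. cdet x + t * cdet_grad x m + t^2 * (cdet_hess m m / 2)) has_real_derivative cdet_grad x m) (at 0)"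
    by (auto intro!: derivative_eq_intros)
  from DERIV_chain2[OF DERIV_real_sqrt this] assms(1)
  have "((\<lambda>t. nu (x + t *\<^sub>R axis m 1)) has_real_derivative inverse (nu x) / 2 * cdet_grad x m) (at 0)"
    unfolding nu_def cdet_along_axis by simp
  moreover have "(\<phi> has_real_derivative 2 * nu x * \<phi>') (at (nu (x + 0 *\<^sub>R axis m 1)))"
    using assms(2) by simp
  ultimately have "((\<lambda>t. \<phi> (nu (x + t *\<^sub>R axis m 1))) has_real_derivative
      2 * nu x * \<phi>' * (inverse (nu x) / 2 * cdet_grad x m)) (at 0)"
    by (rule DERIV_chain2[rotated])
  moreover have "nu x \<noteq> 0" unfolding nu_def using assms(1) by simp
  ultimately show ?thesis by (simp add: field_simps)
qed

lemma gco_eq: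
  assumes "1/4 < cdet x"
  shows "gco x i j = metric_P (nu x) * cdet_hess i j + metric_Q (nu x) * cdet_grad x i * cdet_grad x j"
  unfolding gco_def KMB_sym_of_coords[OF assms] cdet_form_axis_right cdet_grad_axis ..

definition metric_deriv :: "real^3 \<Rightarrow> 3 \<Rightarrow> 3 \<Rightarrow> 3 \<Rightarrow> real" where
  "metric_deriv x m i j =
    metric_Q (nu x) * (cdet_grad x m * cdet_hess i j + cdet_hess m i * cdet_grad x j + cdet_grad x i * cdet_hess m j)
    + metric_Q1 (nu x) * cdet_grad x m * cdet_grad x i * cdet_grad x j"

lemma pd_gco:
  assumes "1/4 < cdet x"
  shows "pd (\<lambda>y. gco y i j) m x = metric_deriv x m i j"
proof (rule pd_eq_on_open[OF open_cdet_gt])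
  show "x \<in> {y. 1/4 < cdet y}" using assms by simp
  show "gco y i j = metric_P (nu y) * cdet_hess i j + metric_Q (nu y) * cdet_grad y i * cdet_grad y j"
    if "y \<in> {y. 1/4 < cdet y}" for y
    using that gco_eq by simp
  have v: "1/2 < nu x" and "0 < cdet x" using nu_gt_half assms by auto
  note along = nu_along_axis_has_derivative[OF \<open>0 < cdet x\<close>]
  have "((\<lambda>t. metric_P (nu (x + t *\<^sub>R axis m 1)) * cdet_hess i j
      + metric_Q (nu (x + t *\<^sub>R axis m 1)) * (cdet_grad x i + t * cdet_hess m i) * (cdet_grad x j + t * cdet_hess m j))
      has_real_derivative metric_deriv x m i j) (at 0)"
    by (auto intro!: derivative_eq_intros along metric_P_has_derivative metric_Q_has_derivative v
        simp: metric_deriv_def algebra_simps)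
  then show "((\<lambda>t. metric_P (nu (x + t *\<^sub>R axis m 1)) * cdet_hess i j + metric_Q (nu (x + t *\<^sub>R axis m 1))
      * cdet_grad (x + t *\<^sub>R axis m 1) i * cdet_grad (x + t *\<^sub>R axis m 1) j) has_real_derivative metric_deriv x m i j) (at 0)"
    unfolding cdet_grad_along_axis .
qed

section \<open>Inverse metric and Christoffel symbols\<close>

text \<open>Sherman-Morrison: \<open>cdet_hess_inv\<close> maps \<open>cdet_grad x\<close> to \<open>x\<close>, and \<open>cdet_grad x \<bullet> x = 2 * cdet x\<close>.\<close>

lemma matrix_inv_metric_form:
  assumes "\<pi> * P = 1" "\<rho> * (P + 2 * cdet x * Q) = 1"
  shows "matrix_inv (\<chi> i j. P * cdet_hess i j + Q * cdet_grad x i * cdet_grad x j)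
    = (\<chi> k l. \<pi> * cdet_hess_inv k l - Q * \<pi> * \<rho> * x$k * x$l)"
proof (rule matrix_inv_unique)
  have \<rho>: "\<rho> * (P + 2 * (x$1 * x$3 - (x$2)^2) * Q) = 1" using assms(2) unfolding cdet_def .
  show "(\<chi> i j. P * cdet_hess i j + Q * cdet_grad x i * cdet_grad x j)
      ** (\<chi> k l. \<pi> * cdet_hess_inv k l - Q * \<pi> * \<rho> * x$k * x$l) = mat 1"
   and "(\<chi> k l. \<pi> * cdet_hess_inv k l - Q * \<pi> * \<rho> * x$k * x$l)
      ** (\<chi> i j. P * cdet_hess i j + Q * cdet_grad x i * cdet_grad x j) = mat 1"
    unfolding vec_eq_iff forall_3 matrix_matrix_mult_def sum_3 mat_def
    using assms(1) \<rho> by (simp_all add: cdet_hess_def cdet_hess_inv_def cdet_grad_def; algebra)+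
qed

definition inv_P :: "real \<Rightarrow> real" where
  "inv_P v = 1 / metric_P v"

lemma inv_P_mult_metric_P: "1/2 < v \<Longrightarrow> inv_P v * metric_P v = 1"
  unfolding inv_P_def using metric_P_neg[of v] by simp

lemma kappa_mult_metric_P_Q: "1/2 < v \<Longrightarrow> kappa v / 2 * (metric_P v + 2 * v^2 * metric_Q v) = 1"
  using nonzero_if_gt_half[of v] unfolding metric_P_def metric_Q_def
  by (simp add: field_simps power2_eq_square power3_eq_cube)

lemma ginv_eq:
  assumes "1/4 < cdet x"
  shows "ginv x $ k $ l =
    inv_P (nu x) * cdet_hess_inv k l - metric_Q (nu x) * inv_P (nu x) * (kappa (nu x) / 2) * x$k * x$l"
proof -
  have v: "1/2 < nu x" using nu_gt_half[OF assms] .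
  have "kappa (nu x) / 2 * (metric_P (nu x) + 2 * cdet x * metric_Q (nu x)) = 1"
    using kappa_mult_metric_P_Q[OF v] nu_squared[of x] assms by simp
  from matrix_inv_metric_form[OF inv_P_mult_metric_P[OF v] this] show ?thesis
    unfolding ginv_def gco_eq[OF assms] by simp
qed

definition christoffel_form :: "real \<Rightarrow> real \<Rightarrow> real \<Rightarrow> real^3 \<Rightarrow> 3 \<Rightarrow> 3 \<Rightarrow> 3 \<Rightarrow> real" where
  "christoffel_form a b e x k i j =
    a * (cdet_grad x i * of_bool (j = k) + cdet_grad x j * of_bool (i = k))
    + x$k * (b * cdet_grad x i * cdet_grad x j + e * cdet_hess i j)"

lemma christoffel_of_metric_form:
  fixes \<pi> \<rho> Q Q1 :: real and x :: "real^3"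
  defines "dg \<equiv> \<lambda>m i j. Q * (cdet_grad x m * cdet_hess i j + cdet_hess m i * cdet_grad x j + cdet_grad x i * cdet_hess m j)
    + Q1 * cdet_grad x m * cdet_grad x i * cdet_grad x j"
  shows "(1/2) * (\<Sum>l\<in>UNIV. (\<pi> * cdet_hess_inv k l - Q * \<pi> * \<rho> * x$k * x$l) * (dg i j l + dg j i l - dg l i j))
    = christoffel_form (\<pi> * Q / 2) (\<pi> * Q1 / 2 - Q * \<pi> * \<rho> * (Q + cdet x * Q1))
        (\<pi> * Q / 2 - \<pi> * \<rho> * cdet x * Q^2) x k i j"
  unfolding dg_def sum_3 christoffel_form_def
  using exhaust_3[of k] exhaust_3[of i] exhaust_3[of j]
  by (elim disjE; simp add: cdet_hess_def cdet_hess_inv_def cdet_grad_def cdet_def algebra_simps power2_eq_square)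

definition chr_a :: "real \<Rightarrow> real" where
  "chr_a v = inv_P v * metric_Q v / 2"

definition chr_b :: "real \<Rightarrow> real" where
  "chr_b v = inv_P v * metric_Q1 v / 2 - metric_Q v * inv_P v * (kappa v / 2) * (metric_Q v + v^2 * metric_Q1 v)"

definition chr_e :: "real \<Rightarrow> real" where
  "chr_e v = metric_Q v * kappa v / 4"

lemma Chr_eq:
  assumes "1/4 < cdet x"
  shows "Chr x k i j = christoffel_form (chr_a (nu x)) (chr_b (nu x)) (chr_e (nu x)) x k i j"
proof -
  define v where "v = nu x"
  have v: "1/2 < v" and v2: "cdet x = v^2"
    unfolding v_def using nu_gt_half[OF assms] nu_squared[of x] assms by simp_all
  have "inv_P v * metric_Q v / 2 - inv_P v * (kappa v / 2) * cdet x * (metric_Q v)^2 = chr_e v"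
  proof -
    have "inv_P v * metric_Q v / 2 - inv_P v * (kappa v / 2) * v^2 * (metric_Q v)^2 - chr_e v
        = metric_Q v / 2 * (kappa v / 2 * (inv_P v * metric_P v - 1)
          + inv_P v * (1 - kappa v / 2 * (metric_P v + 2 * v^2 * metric_Q v)))"
      unfolding chr_e_def by (simp add: algebra_simps power2_eq_square)
    then show ?thesis
      unfolding v2 using inv_P_mult_metric_P[OF v] kappa_mult_metric_P_Q[OF v] by simp
  qed
  then show ?thesis
    unfolding Chr_def ginv_eq[OF assms] pd_gco[OF assms] metric_deriv_def v_def[symmetric]
      christoffel_of_metric_form chr_a_def chr_b_def v2
    by simp
qed

lemma inv_P_has_derivative:
  assumes "1/2 < v" "D = 2 * v * (- metric_Q v * (inv_P v)^2)"
  shows "(inv_P has_real_derivative D) (at v within S)"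
  unfolding assms(2) inv_P_def[abs_def] using metric_P_neg[OF assms(1)] assms(1)
  by (auto intro!: derivative_eq_intros metric_P_has_derivative simp: field_simps power2_eq_square)

definition chr_da :: "real \<Rightarrow> real" where
  "chr_da v = (inv_P v * metric_Q1 v - (metric_Q v)^2 * (inv_P v)^2) / 2"

text \<open>Only the existence of this derivative matters: it cancels from the Ricci tensor, which is why
  \<open>ricci_alpha\<close> takes no argument for it.\<close>

definition chr_db :: "real \<Rightarrow> real" where
  "chr_db v = deriv chr_b v / (2 * v)"

definition chr_de :: "real \<Rightarrow> real" where
  "chr_de v = metric_Q1 v * kappa v / 4 + metric_Q v"

lemma chr_a_has_derivative: "1/2 < v \<Longrightarrow> (chr_a has_real_derivative 2 * v * chr_da v) (at v)"
  unfolding chr_a_def[abs_def]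
  by (auto intro!: derivative_eq_intros inv_P_has_derivative metric_Q_has_derivative
      simp: chr_da_def field_simps power2_eq_square)

lemma chr_e_has_derivative: "1/2 < v \<Longrightarrow> (chr_e has_real_derivative 2 * v * chr_de v) (at v)"
  unfolding chr_e_def[abs_def]
  by (auto intro!: derivative_eq_intros kappa_has_derivative metric_Q_has_derivative
      simp: chr_de_def algebra_simps)

lemma chr_b_has_derivative:
  assumes "1/2 < v"
  shows "(chr_b has_real_derivative 2 * v * chr_db v) (at v)"
proof -
  have "\<exists>D. (metric_Q1 has_real_derivative D) (at v)"
    unfolding metric_Q1_def[abs_def] using nonzero_if_gt_half[OF assms]
    by (auto intro!: exI derivative_eq_intros kappa_has_derivative log_ratio_has_derivative assms)
  then obtain Q2 where "(metric_Q1 has_real_derivative Q2) (at v)" by blast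
  then have "\<exists>D. (chr_b has_real_derivative D) (at v)"
    unfolding chr_b_def[abs_def] using assms
    by (auto intro!: exI derivative_eq_intros inv_P_has_derivative metric_Q_has_derivative kappa_has_derivative)
  then have "(chr_b has_real_derivative deriv chr_b v) (at v)"
    using DERIV_imp_deriv by blast
  then show ?thesis unfolding chr_db_def using assms by simp
qed

definition christoffel_form_deriv ::
    "real \<Rightarrow> real \<Rightarrow> real \<Rightarrow> real \<Rightarrow> real \<Rightarrow> real \<Rightarrow> real^3 \<Rightarrow> 3 \<Rightarrow> 3 \<Rightarrow> 3 \<Rightarrow> 3 \<Rightarrow> real" where
  "christoffel_form_deriv a b e A B E x m k i j =
    A * cdet_grad x m * (cdet_grad x i * of_bool (j = k) + cdet_grad x j * of_bool (i = k))
    + a * (cdet_hess m i * of_bool (j = k) + cdet_hess m j * of_bool (i = k))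
    + of_bool (m = k) * (b * cdet_grad x i * cdet_grad x j + e * cdet_hess i j)
    + x$k * (B * cdet_grad x m * cdet_grad x i * cdet_grad x j
      + b * (cdet_hess m i * cdet_grad x j + cdet_grad x i * cdet_hess m j) + E * cdet_grad x m * cdet_hess i j)"

lemma pd_Chr:
  assumes "1/4 < cdet x"
  shows "pd (\<lambda>y. Chr y k i j) m x = christoffel_form_deriv (chr_a (nu x)) (chr_b (nu x)) (chr_e (nu x))
    (chr_da (nu x)) (chr_db (nu x)) (chr_de (nu x)) x m k i j"
proof (rule pd_eq_on_open[OF open_cdet_gt])
  show "x \<in> {y. 1/4 < cdet y}" using assms by simp
  show "Chr y k i j = christoffel_form (chr_a (nu y)) (chr_b (nu y)) (chr_e (nu y)) y k i j"
    if "y \<in> {y. 1/4 < cdet y}" for y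
    using that Chr_eq by simp
  have v: "1/2 < nu x" and "0 < cdet x" using nu_gt_half assms by auto
  note along = nu_along_axis_has_derivative[OF \<open>0 < cdet x\<close>]
  have "((\<lambda>t. chr_a (nu (x + t *\<^sub>R axis m 1))) has_real_derivative chr_da (nu x) * cdet_grad x m) (at 0)"
    "((\<lambda>t. chr_b (nu (x + t *\<^sub>R axis m 1))) has_real_derivative chr_db (nu x) * cdet_grad x m) (at 0)"
    "((\<lambda>t. chr_e (nu (x + t *\<^sub>R axis m 1))) has_real_derivative chr_de (nu x) * cdet_grad x m) (at 0)"
    by (intro along chr_a_has_derivative chr_b_has_derivative chr_e_has_derivative v)+
  then show "((\<lambda>t. christoffel_form (chr_a (nu (x + t *\<^sub>R axis m 1))) (chr_b (nu (x + t *\<^sub>R axis m 1)))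
      (chr_e (nu (x + t *\<^sub>R axis m 1))) (x + t *\<^sub>R axis m 1) k i j) has_real_derivative
      christoffel_form_deriv (chr_a (nu x)) (chr_b (nu x)) (chr_e (nu x))
        (chr_da (nu x)) (chr_db (nu x)) (chr_de (nu x)) x m k i j) (at 0)"
    unfolding christoffel_form_def cdet_grad_along_axis component_along_axis
    by (auto intro!: derivative_eq_intros simp: christoffel_form_deriv_def algebra_simps)
qed

section \<open>Curvature\<close>

definition ricci_alpha :: "real \<Rightarrow> real \<Rightarrow> real \<Rightarrow> real \<Rightarrow> real \<Rightarrow> real \<Rightarrow> real" where
  "ricci_alpha D a b e A E = - 2 * A + 3 * b - E + 2 * a^2 + 4 * D * a * b - 2 * D * b * e - e^2"

definition ricci_beta :: "real \<Rightarrow> real \<Rightarrow> real \<Rightarrow> real \<Rightarrow> real \<Rightarrow> real" where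
  "ricci_beta D a b e E = - 2 * a + 2 * e + 2 * D * E - 2 * D * b + 4 * D * a * e + 4 * D^2 * b * e + 2 * D * e^2"

lemma ricci_of_christoffel_form:
  "(\<Sum>r\<in>UNIV. christoffel_form_deriv a b e A B E x r r n s - christoffel_form_deriv a b e A B E x n r r s
      + (\<Sum>l\<in>UNIV. christoffel_form a b e x r r l * christoffel_form a b e x l n s
        - christoffel_form a b e x r n l * christoffel_form a b e x l r s))
   = ricci_alpha (cdet x) a b e A E * cdet_grad x s * cdet_grad x n + ricci_beta (cdet x) a b e E * cdet_hess s n"
  unfolding sum_3 christoffel_form_def christoffel_form_deriv_def
  using exhaust_3[of s] exhaust_3[of n]
  by (elim disjE; simp add: ricci_alpha_def ricci_beta_def cdet_hess_def cdet_grad_def cdet_def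
      algebra_simps power2_eq_square)

lemma Ric_eq:
  assumes "1/4 < cdet x"
  shows "Ric x s n =
    ricci_alpha (cdet x) (chr_a (nu x)) (chr_b (nu x)) (chr_e (nu x)) (chr_da (nu x)) (chr_de (nu x))
      * cdet_grad x s * cdet_grad x n
    + ricci_beta (cdet x) (chr_a (nu x)) (chr_b (nu x)) (chr_e (nu x)) (chr_de (nu x)) * cdet_hess s n"
  unfolding Ric_def Riem_def pd_Chr[OF assms] Chr_eq[OF assms] by (rule ricci_of_christoffel_form)

lemma scalar_contraction:
  "(\<Sum>s\<in>UNIV. \<Sum>n\<in>UNIV. (\<pi> * cdet_hess_inv s n - Q * \<pi> * \<rho> * x$s * x$n)
      * (\<alpha> * cdet_grad x s * cdet_grad x n + \<beta> * cdet_hess s n))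
   = \<alpha> * (2 * cdet x * \<pi> - 4 * (cdet x)^2 * Q * \<pi> * \<rho>) + \<beta> * (3 * \<pi> - 2 * cdet x * Q * \<pi> * \<rho>)"
  unfolding sum_3
  by (simp add: cdet_hess_inv_def cdet_hess_def cdet_grad_def cdet_def algebra_simps power2_eq_square)

lemma inv_P_eq: "1/2 < v \<Longrightarrow> inv_P v = - 2 * v / log_ratio v"
  unfolding inv_P_def metric_P_def using log_ratio_pos[of v] by simp

lemma chr_a_eq:
  assumes v: "1/2 < v"
  shows "chr_a v = (- (v^2 * log_ratio v) - v + log_ratio v / 4) / (v^2 * kappa v * log_ratio v)"
  unfolding chr_a_def inv_P_eq[OF v] metric_Q_def
  using nonzero_if_gt_half[OF v] apply (simp add: field_simps)
  unfolding kappa_def by algebra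

lemma chr_b_eq:
  assumes v: "1/2 < v"
  shows "chr_b v = (- (v^4 * (log_ratio v)^2 / 2) - v^3 * log_ratio v / 2 + v^2 * (log_ratio v)^2 / 4 + v^2
    - v * log_ratio v / 8 - (log_ratio v)^2 / 32) / (v^5 * kappa v * log_ratio v)"
  unfolding chr_b_def inv_P_eq[OF v] metric_Q_def metric_Q1_def
  using nonzero_if_gt_half[OF v] apply (simp add: field_simps)
  unfolding kappa_def by algebra

lemma chr_e_eq:
  assumes v: "1/2 < v"
  shows "chr_e v = (v^2 * log_ratio v / 4 + v / 4 - log_ratio v / 16) / v^3"
  unfolding chr_e_def metric_Q_def
  using nonzero_if_gt_half[OF v] apply (simp add: field_simps)
  unfolding kappa_def by algebra

lemma chr_da_eq:
  assumes v: "1/2 < v"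
  shows "chr_da v = (4 * v^4 * (log_ratio v)^2 + 6 * v^3 * log_ratio v - 2 * v^2 * (log_ratio v)^2 - 2 * v^2
    - v * log_ratio v / 2 + (log_ratio v)^2 / 4) / (v^4 * (kappa v)^2 * (log_ratio v)^2)"
  unfolding chr_da_def inv_P_eq[OF v] metric_Q_def metric_Q1_def
  using nonzero_if_gt_half[OF v] apply (simp add: field_simps)
  unfolding kappa_def by algebra

lemma chr_de_eq:
  assumes v: "1/2 < v"
  shows "chr_de v = (- (v^2 * log_ratio v / 8) - 3 * v / 8 + 3 * log_ratio v / 32) / v^5"
  unfolding chr_de_def metric_Q_def metric_Q1_def
  using nonzero_if_gt_half[OF v] apply (simp add: field_simps)
  unfolding kappa_def by algebra

lemma ricci_alpha_eq:
  assumes v: "1/2 < v"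
  shows "ricci_alpha (v^2) (chr_a v) (chr_b v) (chr_e v) (chr_da v) (chr_de v) =
    (- (2 * v^5 * (log_ratio v)^3) - 4 * v^4 * (log_ratio v)^2 + v^3 * (log_ratio v)^3
      + v^2 * (log_ratio v)^2 / 2 + 2 * v^2 - v * (log_ratio v)^3 / 8 - v * log_ratio v + (log_ratio v)^2 / 8)
    / (v^4 * (kappa v)^2 * (log_ratio v)^2)"
  unfolding ricci_alpha_def chr_a_eq[OF v] chr_b_eq[OF v] chr_e_eq[OF v] chr_da_eq[OF v] chr_de_eq[OF v]
  using nonzero_if_gt_half[OF v] apply (simp add: field_simps)
  unfolding kappa_def by algebra

lemma ricci_beta_eq:
  assumes v: "1/2 < v"
  shows "ricci_beta (v^2) (chr_a v) (chr_b v) (chr_e v) (chr_de v) =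
    (v^2 * log_ratio v + v - log_ratio v / 4) / (v * kappa v)"
  unfolding ricci_beta_def chr_a_eq[OF v] chr_b_eq[OF v] chr_e_eq[OF v] chr_de_eq[OF v]
  using nonzero_if_gt_half[OF v] apply (simp add: field_simps)
  unfolding kappa_def by algebra

definition scal_fun :: "real \<Rightarrow> real" where
  "scal_fun v = - 2 + kappa v / (8 * v^2) - 1 / (v * log_ratio v) - 2 / (kappa v * v * log_ratio v)
    + 2 / (kappa v * (log_ratio v)^2)"

lemma scal_coords_eq:
  assumes "1/4 < cdet x"
  shows "scal_coords x = scal_fun (nu x)"
proof -
  define v where "v = nu x"
  have v: "1/2 < v" and v2: "cdet x = v^2"
    unfolding v_def using nu_gt_half[OF assms] nu_squared[of x] assms by simp_all
  have "scal_coords x =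
      ricci_alpha (v^2) (chr_a v) (chr_b v) (chr_e v) (chr_da v) (chr_de v)
        * (2 * v^2 * inv_P v - 4 * (v^2)^2 * metric_Q v * inv_P v * (kappa v / 2))
      + ricci_beta (v^2) (chr_a v) (chr_b v) (chr_e v) (chr_de v)
        * (3 * inv_P v - 2 * v^2 * metric_Q v * inv_P v * (kappa v / 2))"
    unfolding scal_coords_def ginv_eq[OF assms] Ric_eq[OF assms] scalar_contraction v_def[symmetric] v2 ..
  also have "2 * v^2 * inv_P v - 4 * (v^2)^2 * metric_Q v * inv_P v * (kappa v / 2) = 4 * v^4 - v^2"
    unfolding inv_P_eq[OF v] metric_Q_def
    using nonzero_if_gt_half[OF v] apply (simp add: field_simps)
    unfolding kappa_def by algebra
  also have "3 * inv_P v - 2 * v^2 * metric_Q v * inv_P v * (kappa v / 2)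
      = (2 * v^2 * log_ratio v - 4 * v - log_ratio v / 2) / log_ratio v"
    unfolding inv_P_eq[OF v] metric_Q_def
    using nonzero_if_gt_half[OF v] apply (simp add: field_simps)
    unfolding kappa_def by algebra
  also have "ricci_alpha (v^2) (chr_a v) (chr_b v) (chr_e v) (chr_da v) (chr_de v) * (4 * v^4 - v^2)
      + ricci_beta (v^2) (chr_a v) (chr_b v) (chr_e v) (chr_de v)
        * ((2 * v^2 * log_ratio v - 4 * v - log_ratio v / 2) / log_ratio v) = scal_fun v"
    unfolding ricci_alpha_eq[OF v] ricci_beta_eq[OF v] scal_fun_def
    using nonzero_if_gt_half[OF v] apply (simp add: field_simps)
    unfolding kappa_def by algebra
  finally show ?thesis unfolding v_def .
qed

section \<open>Monotonicity in \<open>\<nu>\<close>\<close>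

lemma strict_mono_on_greaterThan_if_deriv_pos:
  fixes f f' :: "real \<Rightarrow> real"
  assumes "\<And>x. a < x \<Longrightarrow> (f has_real_derivative f' x) (at x)" "\<And>x. a < x \<Longrightarrow> 0 < f' x"
  shows "strict_mono_on {a<..} f"
proof (rule strict_mono_onI)
  fix r s assume "r \<in> {a<..}" "s \<in> {a<..}" "r < s"
  then show "f r < f s"
    using assms by (metis DERIV_pos_imp_increasing greaterThan_iff less_le_trans)
qed

definition scal_fun_deriv :: "real \<Rightarrow> real" where
  "scal_fun_deriv v = 1 / (4 * v^3) + (log_ratio v - 4 * v / kappa v) / (v^2 * (log_ratio v)^2)
    + 2 * (8 * v^2 * log_ratio v + kappa v * log_ratio v - 4 * v) / ((kappa v)^2 * v^2 * (log_ratio v)^2)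
    - 16 * (v * log_ratio v - 1) / ((kappa v)^2 * (log_ratio v)^3)"

lemma scal_fun_has_derivative:
  assumes v: "1/2 < v"
  shows "(scal_fun has_real_derivative scal_fun_deriv v) (at v)"
  unfolding scal_fun_def[abs_def] using nonzero_if_gt_half[OF v] v
  apply (auto intro!: derivative_eq_intros kappa_has_derivative log_ratio_has_derivative)
  unfolding scal_fun_deriv_def
  apply (simp add: field_simps)
  unfolding kappa_def by algebra

lemma scal_fun_deriv_pos:
  assumes v: "1/2 < v"
  shows "0 < scal_fun_deriv v"
proof -
  define k L where "k = kappa v" and "L = log_ratio v"
  have k: "0 < k" and L: "0 < L" and "0 < v"
    unfolding k_def L_def using kappa_pos[OF v] log_ratio_pos[OF v] v by simp_all
  \<comment> \<open>After clearing denominators: \<open>k\<^sup>2 L\<^sup>3\<close> plus a quadratic in \<open>L\<close> with negative discriminant.\<close>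
  define A2 A1 A0 where "A2 = 4 * v * k^2 + 64 * v^3 + 8 * v * k"
    and "A1 = 16 * v^2 * k + 32 * v^2 + 64 * v^4" and "A0 = 64 * v^3"
  have "0 < A2" unfolding A2_def using \<open>0 < v\<close> k by (simp add: add_pos_pos)
  have "4 * A2 * (A2 * L^2 - A1 * L + A0) = (2 * A2 * L - A1)^2 + 256 * v^4 * (48 * v^2 - 5)"
    unfolding A2_def A1_def A0_def k_def kappa_def by algebra
  moreover have "1/2 * (1/2) < v * v" using v by (intro mult_strict_mono) auto
  then have "0 < 48 * v^2 - 5" by (simp add: power2_eq_square)
  then have "0 < 256 * v^4 * (48 * v^2 - 5)" using \<open>0 < v\<close> by simp
  ultimately have "0 < 4 * A2 * (A2 * L^2 - A1 * L + A0)"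
    by (metis add_nonneg_pos zero_le_power2)
  then have "0 < k^2 * L^3 + (A2 * L^2 - A1 * L + A0)"
    using \<open>0 < A2\<close> k L by (simp add: add_pos_pos zero_less_mult_iff)
  moreover have "scal_fun_deriv v = (k^2 * L^3 + (A2 * L^2 - A1 * L + A0)) / (4 * v^3 * k^2 * L^3)"
    unfolding scal_fun_deriv_def A2_def A1_def A0_def k_def[symmetric] L_def[symmetric]
    using k L \<open>0 < v\<close> apply (simp add: field_simps)
    unfolding k_def kappa_def by algebra
  ultimately show ?thesis using k L \<open>0 < v\<close> by simp
qed

lemma strict_mono_on_scal_fun: "strict_mono_on {1/2<..} scal_fun"
  by (rule strict_mono_on_greaterThan_if_deriv_pos[OF scal_fun_has_derivative scal_fun_deriv_pos])

definition entropy_fun :: "real \<Rightarrow> real" where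
  "entropy_fun v = (v + 1/2) * log 2 (v + 1/2) - (v - 1/2) * log 2 (v - 1/2)"

lemma strict_mono_on_entropy_fun: "strict_mono_on {1/2<..} entropy_fun"
proof (rule strict_mono_on_greaterThan_if_deriv_pos)
  show "(entropy_fun has_real_derivative log 2 (v + 1/2) - log 2 (v - 1/2)) (at v)" if "1/2 < v" for v
    unfolding entropy_fun_def[abs_def] using that by (auto intro!: derivative_eq_intros)
  show "0 < log 2 (v + 1/2) - log 2 (v - 1/2)" if "1/2 < v" for v
    using that by simp
qed

lemma M1_Scal_S_vN_sqrt_det:
  assumes "V \<in> M1"
  shows "1/2 < sqrt (det V)" and "Scal V = scal_fun (sqrt (det V))" and "S_vN V = entropy_fun (sqrt (det V))"
proof -
  have "det V = cdet (coords_of_sym V)"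
    using assms unfolding M1_def by (simp add: det_eq_cdet)
  then have "sqrt (det V) = nu (coords_of_sym V)" unfolding nu_def by simp
  then show "1/2 < sqrt (det V)" and "Scal V = scal_fun (sqrt (det V))"
    using nu_gt_half scal_coords_eq M1_cdet_gt[OF assms] unfolding Scal_def by simp_all
  show "S_vN V = entropy_fun (sqrt (det V))" unfolding S_vN_def entropy_fun_def Let_def ..
qed

theorem corollary1:
  assumes "V \<in> M1" and "V' \<in> M1"
  shows "Scal V' > Scal V \<longleftrightarrow> S_vN V' > S_vN V"
proof -
  note V = M1_Scal_S_vN_sqrt_det[OF assms(1)] and V' = M1_Scal_S_vN_sqrt_det[OF assms(2)]
  have "Scal V' > Scal V \<longleftrightarrow> sqrt (det V') > sqrt (det V)"
    unfolding V(2) V'(2) using strict_mono_on_less[OF strict_mono_on_scal_fun] V(1) V'(1) by simp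
  also have "\<dots> \<longleftrightarrow> S_vN V' > S_vN V"
    unfolding V(3) V'(3) using strict_mono_on_less[OF strict_mono_on_entropy_fun] V(1) V'(1) by simp
  finally show ?thesis .
qed

end
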